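(* For each integer $n \ge 0$ let $L_n(x)$ denote the $n$-th Laguerre polynomial, $L_n(x) = \sum_{k=0}^{n} (-1)^k \binom{n}{k} \frac{x^k}{k!}$. Let $T$ be the linear transformation on the real vector space $\mathbb{R}[x]$ of real polynomials defined by $T(x^n) = L_n(x)$ for all $n \ge 0$, extended linearly. Then $T$ preserves real-rootedness: if $f \in \mathbb{R}[x]$ has all of its roots real, then $T(f)$ has all of its roots real.
   Context: A real polynomial is said to have all real roots (to be real-rooted) if every one of its complex roots is real. A linear transformation on polynomials preserves real-rootedness if it maps every polynomial with all real roots to a polynomial with all real roots. *)

theory Defs
  imports "HOL-Computational_Algebra.Polynomial" Complex_Main
begin

definition real_rooted :: "real poly \<Rightarrow> bool" where
  "real_rooted p \<longleftrightarrow> (\<forall>z::complex. poly (map_poly complex_of_real p) z = 0 \<longrightarrow> z \<in> \<real>)"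

definition laguerre :: "nat \<Rightarrow> real poly" where
  "laguerre n = (\<Sum>k\<le>n. monom ((-1)^k * real (n choose k) / fact k) k)"

definition laguerre_transform :: "real poly \<Rightarrow> real poly" where
  "laguerre_transform f = (\<Sum>i\<le>degree f. smult (coeff f i) (laguerre i))"

end

theory Submission
  imports Defs "HOL-Computational_Algebra.Fundamental_Theorem_Algebra"
begin

text \<open>Let \<open>n = deg f\<close> and \<open>D = d/dx\<close>. Comparing coefficients gives
  \<open>n! \<cdot> (T f)(-x) = R(D) x\<^sup>n\<close> with \<open>R(x) = x\<^sup>n f(1 + 1/x)\<close>.
  If \<open>f = c \<Prod> (x - r\<^sub>i)\<close> with all \<open>r\<^sub>i\<close> real, then \<open>R = c \<Prod> (1 + (1 - r\<^sub>i) x)\<close>, so \<open>R(D)\<close> is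
  a product of operators \<open>1 + a D\<close>. Each of these preserves real-rootedness: if \<open>p\<close> has
  only real roots \<open>r\<^sub>i\<close> and \<open>z\<close> is not real, then
  \<open>Im z \<cdot> Im (p'(z)/p(z)) = \<Sum> Im z \<cdot> Im (1/(z - r\<^sub>i)) < 0\<close>, hence \<open>p(z) + a p'(z) \<noteq> 0\<close>.\<close>

lemma map_poly_of_real_add:
  "map_poly (of_real :: real \<Rightarrow> 'a::real_field) (p + q) = map_poly of_real p + map_poly of_real q"
  by (intro poly_eqI) (simp add: coeff_map_poly)

lemma map_poly_of_real_smult:
  "map_poly (of_real :: real \<Rightarrow> 'a::real_field) (smult c p) = smult (of_real c) (map_poly of_real p)"
  by (intro poly_eqI) (simp add: coeff_map_poly)

lemma map_poly_of_real_mult: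
  "map_poly (of_real :: real \<Rightarrow> 'a::real_field) (p * q) =
     map_poly of_real p * map_poly of_real q"
  by (induction p) (simp_all add: map_poly_of_real_add map_poly_of_real_smult map_poly_pCons)

lemma map_poly_of_real_pderiv:
  "map_poly (of_real :: real \<Rightarrow> 'a::real_field) (pderiv p) = pderiv (map_poly of_real p)"
  by (intro poly_eqI) (simp add: coeff_map_poly coeff_pderiv)

lemma map_poly_of_real_pcompose:
  "map_poly (of_real :: real \<Rightarrow> 'a::real_field) (pcompose p q) =
     pcompose (map_poly of_real p) (map_poly of_real q)"
  by (induction p)
    (simp_all add: pcompose_pCons map_poly_pCons map_poly_of_real_add map_poly_of_real_mult)

lemma map_poly_of_real_linear_factors:
  "map_poly (of_real :: real \<Rightarrow> 'a::real_field) (\<Prod>r\<leftarrow>rs. [:-r, 1:]) =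
     (\<Prod>w\<leftarrow>map of_real rs. [:-w, 1:])"
  by (induction rs) (simp_all add: map_poly_of_real_mult map_poly_pCons del: mult_pCons_left)

lemma poly_map_poly_of_real:
  "poly (map_poly (of_real :: real \<Rightarrow> 'a::real_field) p) (of_real x) = of_real (poly p x)"
  by (induction p) (simp_all add: map_poly_pCons)

lemma real_rooted_nonzero: "real_rooted p \<Longrightarrow> p \<noteq> 0"
  unfolding real_rooted_def by (metis Reals_0 complex_is_Real_iff imaginary_unit.sel(2) map_poly_0 poly_0 zero_neq_one)

lemma real_rooted_smult_iff: "c \<noteq> 0 \<Longrightarrow> real_rooted (smult c p) \<longleftrightarrow> real_rooted p"
  unfolding real_rooted_def by (simp add: map_poly_of_real_smult)

lemma real_rooted_monom: "c \<noteq> 0 \<Longrightarrow> real_rooted (monom c n)"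
  unfolding real_rooted_def by (simp add: map_poly_monom poly_monom)

lemma real_rooted_pcompose_uminus: "real_rooted (pcompose p [:0, -1:]) \<Longrightarrow> real_rooted p"
  unfolding real_rooted_def
proof (intro allI impI)
  fix z assume rr: "\<forall>w. poly (map_poly complex_of_real (pcompose p [:0, -1:])) w = 0 \<longrightarrow> w \<in> \<real>"
    and "poly (map_poly complex_of_real p) z = 0"
  then have "poly (map_poly complex_of_real (pcompose p [:0, -1:])) (- z) = 0"
    by (simp add: map_poly_of_real_pcompose map_poly_pCons poly_pcompose)
  with rr have "- z \<in> \<real>" by blast
  then show "z \<in> \<real>" by (simp add: Reals_minus_iff)
qed

lemma real_rooted_linear_factors:
  assumes "real_rooted p"
  shows "\<exists>c rs. c \<noteq> 0 \<and> p = smult c (\<Prod>r\<leftarrow>rs. [:-r, 1:])"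
  using assms
proof (induction "degree p" arbitrary: p rule: less_induct)
  case less
  have p0: "p \<noteq> 0" using real_rooted_nonzero less.prems .
  show ?case
  proof (cases "degree p = 0")
    case True
    then obtain c where "p = [:c:]" by (meson degree_eq_zeroE)
    with p0 show ?thesis by (intro exI[of _ c] exI[of _ "[]"]) auto
  next
    case False
    then have "\<not> constant (poly (map_poly complex_of_real p))"
      by (simp add: constant_degree degree_map_poly)
    then obtain z where z: "poly (map_poly complex_of_real p) z = 0"
      using fundamental_theorem_of_algebra by blast
    with less.prems obtain r where "z = of_real r"
      unfolding real_rooted_def by (blast elim: Reals_cases)
    with z have "poly p r = 0" by (simp add: poly_map_poly_of_real)
    then obtain q where pq: "p = [:-r, 1:] * q" by (metis dvdE poly_eq_0_iff_dvd)
    with p0 have "q \<noteq> 0" by auto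
    then have "degree q < degree p" unfolding pq by (subst degree_mult_eq) auto
    moreover have "real_rooted q"
      using less.prems unfolding real_rooted_def pq map_poly_of_real_mult
      by (simp del: mult_pCons_left)
    ultimately obtain c rs where "c \<noteq> 0" "q = smult c (\<Prod>r\<leftarrow>rs. [:-r, 1:])"
      using less.hyps by blast
    then show ?thesis by (intro exI[of _ c] exI[of _ "r # rs"]) (simp add: pq mult_ac)
  qed
qed

lemma degree_linear_factors: "degree (\<Prod>r\<leftarrow>rs. [:-r, 1:] :: 'a::idom poly) = length rs"
proof (induction rs)
  case (Cons r rs)
  have "(\<Prod>r\<leftarrow>rs. [:-r, 1:] :: 'a poly) \<noteq> 0"
    by (induction rs) (simp_all del: mult_pCons_left)
  with Cons show ?case by (simp add: degree_mult_eq del: mult_pCons_left)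
qed simp

lemma poly_linear_factors_eq_0_iff:
  "poly (\<Prod>w\<leftarrow>ws. [:-w, 1:]) z = 0 \<longleftrightarrow> z \<in> set (ws :: 'a::idom list)"
  by (induction ws) auto

lemma logderiv_linear_factors:
  fixes ws :: "'a::field list"
  assumes "z \<notin> set ws"
  shows "poly (pderiv (\<Prod>w\<leftarrow>ws. [:-w, 1:])) z / poly (\<Prod>w\<leftarrow>ws. [:-w, 1:]) z =
           (\<Sum>w\<leftarrow>ws. inverse (z - w))"
  using assms
proof (induction ws)
  case (Cons w ws)
  let ?Q = "\<Prod>w\<leftarrow>ws. [:-w, 1:]"
  have "z - w \<noteq> 0" "poly ?Q z \<noteq> 0"
    using Cons.prems by (simp_all add: poly_linear_factors_eq_0_iff)
  moreover have "pderiv ([:-w, 1:] * ?Q) = ?Q + [:-w, 1:] * pderiv ?Q"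
    by (simp add: pderiv_mult pderiv_pCons del: mult_pCons_left)
  ultimately show ?case
    using Cons by (simp add: field_simps del: mult_pCons_left)
qed simp

lemma Im_mult_Im_inverse_diff_real_neg:
  assumes "Im z \<noteq> 0"
  shows "Im z * Im (inverse (z - of_real r)) < 0"
proof -
  have "Im z * Im (inverse (z - of_real r)) = - (Im z)\<^sup>2 / ((Re z - r)\<^sup>2 + (Im z)\<^sup>2)"
    by (simp add: power2_eq_square)
  also have "\<dots> < 0" using assms by (simp add: add_nonneg_pos)
  finally show ?thesis .
qed

lemma Im_mult_Im_sum_inverse_diff_real_neg:
  assumes "Im z \<noteq> 0" "rs \<noteq> []"
  shows "Im z * Im (\<Sum>r\<leftarrow>rs. inverse (z - of_real r)) < 0"
  using assms(2)
proof (induction rs)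
  case (Cons r rs)
  have "Im z * Im (\<Sum>r\<leftarrow>r # rs. inverse (z - of_real r)) =
      Im z * Im (inverse (z - of_real r)) + Im z * Im (\<Sum>r\<leftarrow>rs. inverse (z - of_real r))"
    by (simp only: list.map sum_list.Cons plus_complex.sel distrib_left)
  moreover have "Im z * Im (inverse (z - of_real r)) < 0"
    using assms(1) by (rule Im_mult_Im_inverse_diff_real_neg)
  ultimately show ?case
    using Cons.IH by (cases "rs = []") auto
qed simp

lemma real_rooted_add_smult_pderiv:
  assumes "real_rooted p"
  shows "real_rooted (p + smult a (pderiv p))"
  unfolding real_rooted_def
proof (intro allI impI)
  fix z assume root: "poly (map_poly complex_of_real (p + smult a (pderiv p))) z = 0"
  show "z \<in> \<real>"
  proof (rule ccontr)
    assume "z \<notin> \<real>"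
    then have Im_z: "Im z \<noteq> 0" by (simp add: complex_is_Real_iff)
    obtain c rs where "c \<noteq> 0" and p: "p = smult c (\<Prod>r\<leftarrow>rs. [:-r, 1:])"
      using real_rooted_linear_factors[OF assms] by blast
    define Q where "Q = (\<Prod>w\<leftarrow>map complex_of_real rs. [:-w, 1:])"
    define S where "S = (\<Sum>r\<leftarrow>rs. inverse (z - of_real r))"
    have z_notin: "z \<notin> set (map complex_of_real rs)" using \<open>z \<notin> \<real>\<close> by auto
    have Q0: "poly Q z \<noteq> 0"
      using z_notin unfolding Q_def poly_linear_factors_eq_0_iff .
    have "poly (pderiv Q) z / poly Q z = S"
      using logderiv_linear_factors[OF z_notin] by (simp add: Q_def S_def comp_def)
    with Q0 have Q': "poly (pderiv Q) z = S * poly Q z" by (simp add: field_simps)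
    have "of_real c * (poly Q z + of_real a * poly (pderiv Q) z) = 0"
      using root unfolding p Q_def
      by (simp add: map_poly_of_real_add map_poly_of_real_smult map_poly_of_real_pderiv
          map_poly_of_real_linear_factors pderiv_smult algebra_simps)
    with \<open>c \<noteq> 0\<close> have "poly Q z + of_real a * poly (pderiv Q) z = 0" by simp
    then have "poly Q z * (1 + of_real a * S) = 0" by (simp add: Q' algebra_simps)
    with Q0 have S: "1 + of_real a * S = 0" by simp
    then have "S \<noteq> 0" by auto
    then have "rs \<noteq> []" by (auto simp: S_def)
    with Im_z have "Im z * Im S < 0"
      unfolding S_def by (rule Im_mult_Im_sum_inverse_diff_real_neg)
    moreover have "a * Im S = 0" using arg_cong[OF S, of Im] by simp
    moreover have "a \<noteq> 0" using S by auto
    ultimately show False by simp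
  qed
qed

lemma smult_sum_right: "smult a (sum f S) = (\<Sum>i\<in>S. smult a (f i))"
  by (induction S rule: infinite_finite_induct) (simp_all add: smult_add_right)

lemma higher_pderiv_eq_0: "degree p < j \<Longrightarrow> (pderiv ^^ j) p = 0"
  by (intro poly_eqI) (simp add: coeff_higher_pderiv coeff_eq_0)

lemma pderiv_sum: "pderiv (sum f A) = (\<Sum>x\<in>A. pderiv (f x))"
  using higher_pderiv_sum[of 1 f A] by simp

text \<open>\<open>pderiv_op h p\<close> is \<open>h(D) p\<close>; the sum may stop at \<open>degree p\<close>, where \<open>D\<^sup>j p\<close> vanishes.\<close>

definition pderiv_op :: "'a::{idom,semiring_char_0} poly \<Rightarrow> 'a poly \<Rightarrow> 'a poly" where
  "pderiv_op h p = (\<Sum>j\<le>degree p. smult (coeff h j) ((pderiv ^^ j) p))"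

lemma pderiv_op_atMost:
  "degree p \<le> N \<Longrightarrow> pderiv_op h p = (\<Sum>j\<le>N. smult (coeff h j) ((pderiv ^^ j) p))"
  unfolding pderiv_op_def by (rule sum.mono_neutral_left) (auto simp: higher_pderiv_eq_0)

lemma pderiv_op_add: "pderiv_op (h1 + h2) p = pderiv_op h1 p + pderiv_op h2 p"
  by (simp add: pderiv_op_def sum.distrib smult_add_left)

lemma pderiv_op_smult: "pderiv_op (smult a h) p = smult a (pderiv_op h p)"
  by (simp add: pderiv_op_def smult_sum_right)

lemma pderiv_op_const: "pderiv_op [:c:] p = smult c p"
proof -
  have "pderiv_op [:c:] p = (\<Sum>j\<in>{0}. smult (coeff [:c:] j) ((pderiv ^^ j) p))"
    unfolding pderiv_op_def
    by (rule sum.mono_neutral_right) (auto simp: coeff_pCons split: nat.splits)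
  then show ?thesis by simp
qed

lemma pderiv_op_pCons_0: "pderiv_op (pCons 0 h) p = pderiv_op h (pderiv p)"
proof -
  have "pderiv_op (pCons 0 h) p = (\<Sum>j\<le>Suc (degree p). smult (coeff (pCons 0 h) j) ((pderiv ^^ j) p))"
    by (rule pderiv_op_atMost) simp
  also have "\<dots> = (\<Sum>j\<le>degree p. smult (coeff h j) ((pderiv ^^ j) (pderiv p)))"
    by (subst sum.atMost_Suc_shift) (simp add: funpow_Suc_right del: funpow.simps)
  also have "\<dots> = pderiv_op h (pderiv p)"
    by (rule pderiv_op_atMost[symmetric]) (simp add: degree_pderiv)
  finally show ?thesis .
qed

lemma pderiv_pderiv_op: "pderiv (pderiv_op h p) = pderiv_op h (pderiv p)"
proof -
  have "pderiv (pderiv_op h p) = (\<Sum>j\<le>degree p. smult (coeff h j) ((pderiv ^^ j) (pderiv p)))"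
    unfolding pderiv_op_def pderiv_sum pderiv_smult by (simp add: funpow_swap1)
  also have "\<dots> = pderiv_op h (pderiv p)"
    by (rule pderiv_op_atMost[symmetric]) (simp add: degree_pderiv)
  finally show ?thesis .
qed

lemma pderiv_op_linear_factor:
  "pderiv_op ([:1, a:] * h) p = pderiv_op h p + smult a (pderiv (pderiv_op h p))"
proof -
  have "[:1, a:] * h = h + pCons 0 (smult a h)" by simp
  then show ?thesis by (simp add: pderiv_op_add pderiv_op_pCons_0 pderiv_op_smult pderiv_pderiv_op)
qed

lemma real_rooted_pderiv_op:
  assumes "c \<noteq> 0" "real_rooted p"
  shows "real_rooted (pderiv_op (smult c (\<Prod>a\<leftarrow>as. [:1, a:])) p)"
proof (induction as)
  case Nil
  then show ?case using assms by (simp add: pderiv_op_const real_rooted_smult_iff)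
next
  case (Cons a as)
  have "smult c (\<Prod>a\<leftarrow>a # as. [:1, a:]) = [:1, a:] * smult c (\<Prod>a\<leftarrow>as. [:1, a:])"
    by simp
  with Cons show ?case by (simp only: pderiv_op_linear_factor real_rooted_add_smult_pderiv)
qed

lemma coeff_laguerre: "coeff (laguerre n) k = (-1)^k * real (n choose k) / fact k"
proof (cases "k \<le> n")
  case True
  have "coeff (laguerre n) k = (\<Sum>j\<in>{k}. coeff (monom ((-1)^j * real (n choose j) / fact j) j) k)"
    unfolding laguerre_def coeff_sum
    by (rule sum.mono_neutral_right) (use True in \<open>auto simp: coeff_monom\<close>)
  then show ?thesis by (simp add: coeff_monom)
next
  case False
  then show ?thesis by (auto simp: laguerre_def coeff_sum coeff_monom intro!: sum.neutral)
qed

text \<open>\<open>laguerre_symbol n f = x\<^sup>n f(1 + 1/x)\<close> for \<open>degree f \<le> n\<close>.\<close>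

definition laguerre_symbol :: "nat \<Rightarrow> real poly \<Rightarrow> real poly" where
  "laguerre_symbol n f = (\<Sum>m\<le>n. smult (coeff f m) (monom 1 (n - m) * [:1, 1:] ^ m))"

lemma coeff_laguerre_symbol:
  assumes "k \<le> n"
  shows "coeff (laguerre_symbol n f) (n - k) = (\<Sum>m\<le>n. coeff f m * real (m choose k))"
  unfolding laguerre_symbol_def coeff_sum
proof (rule sum.cong[OF refl])
  fix m assume "m \<in> {..n}"
  then have "m \<le> n" by simp
  show "coeff (smult (coeff f m) (monom 1 (n - m) * [:1, 1:] ^ m)) (n - k) =
      coeff f m * real (m choose k)"
  proof (cases "k \<le> m")
    case True
    then have "n - k - (n - m) = m - k" using \<open>m \<le> n\<close> by simp
    with True show ?thesis
      by (simp add: coeff_monom_mult coeff_linear_poly_power binomial_symmetric[symmetric])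
  next
    case False
    then have "n - k < n - m" using \<open>m \<le> n\<close> assms by linarith
    with False show ?thesis by (simp add: coeff_monom_mult)
  qed
qed

lemma pochhammer_Suc_diff_eq_fact_div:
  assumes "k \<le> n"
  shows "pochhammer (real k + 1) (n - k) = fact n / fact k"
proof -
  have "fact n = fact k * pochhammer (real k + 1) (n - k)"
    using pochhammer_product'[of 1 k "n - k"] assms by (simp add: pochhammer_fact add.commute)
  then show ?thesis by (simp add: field_simps)
qed

lemma laguerre_transform_reflect_eq_pderiv_op:
  assumes "degree f = n"
  shows "smult (fact n) (pcompose (laguerre_transform f) [:0, -1:]) =
           pderiv_op (laguerre_symbol n f) (monom 1 n)"
proof (rule poly_eqI)
  fix k
  let ?B = "\<Sum>m\<le>n. coeff f m * real (m choose k)"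
  have lhs: "coeff (smult (fact n) (pcompose (laguerre_transform f) [:0, -1:])) k = fact n / fact k * ?B"
    unfolding coeff_smult coeff_pcompose_linear laguerre_transform_def coeff_sum assms
    by (simp add: coeff_laguerre sum_distrib_left field_simps power_mult_distrib[symmetric])
  have rhs: "coeff (pderiv_op (laguerre_symbol n f) (monom 1 n)) k =
      (\<Sum>j\<le>n. coeff (laguerre_symbol n f) j * (pochhammer (real k + 1) j * (if n = j + k then 1 else 0)))"
    unfolding pderiv_op_def coeff_sum
    by (simp add: coeff_higher_pderiv coeff_monom degree_monom_eq add.commute)
  show "coeff (smult (fact n) (pcompose (laguerre_transform f) [:0, -1:])) k =
      coeff (pderiv_op (laguerre_symbol n f) (monom 1 n)) k"
  proof (cases "k \<le> n")
    case True
    have "coeff (pderiv_op (laguerre_symbol n f) (monom 1 n)) k =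
      (\<Sum>j\<in>{n - k}. coeff (laguerre_symbol n f) j * (pochhammer (real k + 1) j * (if n = j + k then 1 else 0)))"
      unfolding rhs by (rule sum.mono_neutral_right) auto
    also have "\<dots> = ?B * (fact n / fact k)"
      using True by (simp add: coeff_laguerre_symbol pochhammer_Suc_diff_eq_fact_div)
    finally show ?thesis unfolding lhs by simp
  next
    case False
    then have "?B = 0" by (intro sum.neutral) auto
    moreover have "coeff (pderiv_op (laguerre_symbol n f) (monom 1 n)) k = 0"
      unfolding rhs using False by (intro sum.neutral) auto
    ultimately show ?thesis unfolding lhs by simp
  qed
qed

lemma laguerre_symbol_smult: "laguerre_symbol n (smult c f) = smult c (laguerre_symbol n f)"
  by (simp add: laguerre_symbol_def smult_sum_right)

lemma laguerre_symbol_diff: "laguerre_symbol n (f - g) = laguerre_symbol n f - laguerre_symbol n g"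
  by (simp add: laguerre_symbol_def sum_subtractf smult_diff_left)

lemma laguerre_symbol_Suc:
  assumes "degree f \<le> n"
  shows "laguerre_symbol (Suc n) f = pCons 0 (laguerre_symbol n f)"
proof -
  have pCons_0_sum: "(\<Sum>x\<in>A. pCons 0 (g x)) = pCons 0 (sum g A)" for A and g :: "nat \<Rightarrow> real poly"
    by (induction A rule: infinite_finite_induct) simp_all
  have "laguerre_symbol (Suc n) f = (\<Sum>m\<le>n. smult (coeff f m) (monom 1 (Suc n - m) * [:1, 1:] ^ m))"
    unfolding laguerre_symbol_def using assms by (simp add: coeff_eq_0)
  also have "\<dots> = (\<Sum>m\<le>n. pCons 0 (smult (coeff f m) (monom 1 (n - m) * [:1, 1:] ^ m)))"
    by (intro sum.cong refl) (simp add: Suc_diff_le monom_Suc)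
  finally show ?thesis unfolding laguerre_symbol_def pCons_0_sum .
qed

lemma laguerre_symbol_Suc_pCons_0:
  "laguerre_symbol (Suc n) (pCons 0 f) = [:1, 1:] * laguerre_symbol n f"
  unfolding laguerre_symbol_def
  by (subst sum.atMost_Suc_shift) (simp add: sum_distrib_left mult_ac del: mult_pCons_left)

lemma laguerre_symbol_linear_factors:
  "laguerre_symbol (length rs) (\<Prod>r\<leftarrow>rs. [:-r, 1:]) = (\<Prod>r\<leftarrow>rs. [:1, 1 - r:])"
proof (induction rs)
  case Nil
  then show ?case by (simp add: laguerre_symbol_def)
next
  case (Cons r rs)
  define g where "g = (\<Prod>r\<leftarrow>rs. [:-r, 1:] :: real poly)"
  have "degree g \<le> length rs" by (simp add: g_def degree_linear_factors)
  moreover have "[:-r, 1:] * g = pCons 0 g - smult r g" by simp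
  ultimately have "laguerre_symbol (length (r # rs)) ([:-r, 1:] * g) =
      [:1, 1:] * laguerre_symbol (length rs) g - smult r (pCons 0 (laguerre_symbol (length rs) g))"
    by (simp add: laguerre_symbol_diff laguerre_symbol_smult laguerre_symbol_Suc_pCons_0
        laguerre_symbol_Suc del: mult_pCons_left)
  also have "\<dots> = [:1, 1 - r:] * laguerre_symbol (length rs) g"
    by (intro poly_eqI) (simp add: coeff_pCons algebra_simps split: nat.split)
  finally show ?case using Cons unfolding g_def by simp
qed

theorem mainTheorem1:
  fixes f :: "real poly"
  assumes "real_rooted f"
  shows "real_rooted (laguerre_transform f)"
proof -
  obtain c rs where "c \<noteq> 0" and f: "f = smult c (\<Prod>r\<leftarrow>rs. [:-r, 1:])"
    using real_rooted_linear_factors[OF assms] by blast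
  define n where "n = degree f"
  have "n = length rs" unfolding n_def f using \<open>c \<noteq> 0\<close> by (simp add: degree_linear_factors)
  then have "laguerre_symbol n f = smult c (\<Prod>a\<leftarrow>map (\<lambda>r. 1 - r) rs. [:1, a:])"
    unfolding f by (simp add: laguerre_symbol_smult laguerre_symbol_linear_factors comp_def)
  then have "real_rooted (pderiv_op (laguerre_symbol n f) (monom 1 n))"
    using \<open>c \<noteq> 0\<close> by (simp only:) (intro real_rooted_pderiv_op real_rooted_monom one_neq_zero)
  then have "real_rooted (smult (fact n) (pcompose (laguerre_transform f) [:0, -1:]))"
    by (simp add: laguerre_transform_reflect_eq_pderiv_op n_def)
  then show ?thesis
    by (simp add: real_rooted_smult_iff real_rooted_pcompose_uminus)
qed

end
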